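(* Each of the sets $\mathcal{L}_{SE}=\{(M,q)\mid SE[U](M)>q\}$, $\mathcal{L}_{ME}=\{(M,q)\mid ME[U](M)>q\}$ and $\mathcal{L}_{GE}=\{(M,q)\mid GE[U](M)>q\}$ is a liveness hyperproperty. That is, for each of them and for every rational number $q$, the set of programs $M$ with $(M,q)$ in it is a liveness hyperproperty.
   Context: Stores $\sigma$ map program variables to values. There is a designated high-security input variable $H$ and a low-security output variable $O$. A trace is a sequence of stores. $\Psi_{\mathrm{inf}}$ and $\Psi_{\mathrm{fin}}$ denote the sets of infinite and of finite traces. For a finite trace $t$, $t\circ t'$ is the concatenation of $t$ and $t'$. A set of traces is deterministic if any two of its traces that start with stores having the same value of $H$ are equal. A program is a deterministic set $M\subseteq\Psi_{\mathrm{inf}}$. Its input domain $\mathbb{H}_M=\{\sigma_0(H)\mid \sigma_0;\sigma_1;\dots\in M\}$ is finite and nonempty. Input domains are not bounded in size: the values of $H$ range over an unbounded set. For $h\in\mathbb{H}_M$, $M(h)$ is the output trace $(\sigma_1(O),\sigma_2(O),\dots)$ of the unique trace $\sigma_0;\sigma_1;\dots$ of $M$ with $\sigma_0(H)=h$. Output traces may contain the symbol $\bot$, which denotes termination. Observation is termination-insensitive: $M(h)=o$ means that for all $i$, $o_i=\bot$ or $M(h)_i=\bot$ or $M(h)_i=o_i$. Given a distribution $\mu$ on $\mathbb{H}_M$, put $\mu(O=o)=\sum_{h:\,M(h)=o}\mu(H=h)$, with joint and conditional probabilities induced accordingly. $U$ denotes the uniform distribution on $\mathbb{H}_M$. The following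 are defined, with logarithms base 2. - Shannon entropy: $\mathcal{H}[\mu](X)=\sum_x\mu(X=x)\log\frac1{\mu(X=x)}$. - Conditional Shannon entropy: $\mathcal{H}[\mu](Y|Z)=\sum_z\mu(Z=z)\sum_y\mu(Y=y|Z=z)\log\frac1{\mu(Y=y|Z=z)}$. - $SE[\mu](M)=\mathcal{H}[\mu](H)-\mathcal{H}[\mu](H|O)$. - $\mathcal{V}[\mu](X)=\max_x\mu(X=x)$ and $\mathcal{V}[\mu](X|Y)=\sum_y\mu(Y=y)\max_x\mu(X=x|Y=y)$. - $ME[\mu](M)=\log\frac1{\mathcal{V}[\mu](H)}-\log\frac1{\mathcal{V}[\mu](H|O)}$. - Guessing entropy: $\mathcal{G}[\mu](X)=\sum_{1\le i\le m}i\,\mu(X=x_i)$, where $x_1,\dots,x_m$ enumerates the sample space with $\mu(X=x_i)$ non-increasing in $i$. - $\mathcal{G}[\mu](X|Y)=\sum_y\mu(Y=y)\sum_i i\,\mu(X=x_i|Y=y)$, with the ordering chosen for each $y$ so that these conditional probabilities are non-increasing. - $GE[\mu](M)=\mathcal{G}[\mu](H)-\mathcal{G}[\mu](H|O)$. Let $\mathit{Prop}$ be the set of programs and $\mathit{Obs}$ the set of finite sets of finite traces that are deterministic. For $S\in\mathit{Obs}$ and $T\in\mathit{Prop}$, $S\le T$ iff for every $t\in S$ there is $t'$ with $t\circ t'\in T$. A hyperproperty is a set $P\subseteq\mathit{Prop}$. $P$ is a liveness hyperproperty iff for every $S\in\mathit{Obs}$ there is $S'\in\mathit{Prop}$ with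 $S\le S'$ and $S'\in P$. A set $\mathcal{P}$ of pairs (program, rational) is called a liveness hyperproperty iff for every rational $q$ the set $\{M\mid(M,q)\in\mathcal{P}\}$ is a liveness hyperproperty. *)

theory Defs
  imports Complex_Main "HOL-Library.Multiset"
begin

(* Stores map variables ('v) to values ('a).  Hvar is the high input variable,
   Ovar the low output variable, botv the termination symbol (a value). *)
type_synonym ('v,'a) store = "'v \<Rightarrow> 'a"
type_synonym ('v,'a) itrace = "nat \<Rightarrow> ('v,'a) store"
type_synonym ('v,'a) ftrace = "('v,'a) store list"

definition deterministic_inf :: "'v \<Rightarrow> ('v,'a) itrace set \<Rightarrow> bool" where
  "deterministic_inf Hvar T \<longleftrightarrow> (\<forall>t\<in>T. \<forall>t'\<in>T. t 0 Hvar = t' 0 Hvar \<longrightarrow> t = t')"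

definition deterministic_fin :: "'v \<Rightarrow> ('v,'a) ftrace set \<Rightarrow> bool" where
  "deterministic_fin Hvar S \<longleftrightarrow>
     (\<forall>t\<in>S. \<forall>t'\<in>S. t \<noteq> [] \<longrightarrow> t' \<noteq> [] \<longrightarrow> hd t Hvar = hd t' Hvar \<longrightarrow> t = t')"

definition input_domain :: "'v \<Rightarrow> ('v,'a) itrace set \<Rightarrow> 'a set" where
  "input_domain Hvar M = {t 0 Hvar | t. t \<in> M}"

definition is_program :: "'v \<Rightarrow> ('v,'a) itrace set \<Rightarrow> bool" where
  "is_program Hvar M \<longleftrightarrow> deterministic_inf Hvar M \<and> finite (input_domain Hvar M) \<and> input_domain Hvar M \<noteq> {}"

definition is_obs :: "'v \<Rightarrow> ('v,'a) ftrace set \<Rightarrow> bool" where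
  "is_obs Hvar S \<longleftrightarrow> finite S \<and> deterministic_fin Hvar S"

definition concat_trace :: "('v,'a) ftrace \<Rightarrow> ('v,'a) itrace \<Rightarrow> ('v,'a) itrace" where
  "concat_trace t t' = (\<lambda>i. if i < length t then t ! i else t' (i - length t))"

definition prefix_le :: "('v,'a) ftrace set \<Rightarrow> ('v,'a) itrace set \<Rightarrow> bool" where
  "prefix_le S T \<longleftrightarrow> (\<forall>t\<in>S. \<exists>t'. concat_trace t t' \<in> T)"

definition liveness :: "'v \<Rightarrow> ('v,'a) itrace set set \<Rightarrow> bool" where
  "liveness Hvar P \<longleftrightarrow> P \<subseteq> {M. is_program Hvar M} \<and>
     (\<forall>S. is_obs Hvar S \<longrightarrow> (\<exists>S'. is_program Hvar S' \<and> prefix_le S S' \<and> S' \<in> P))"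

definition liveness_pairs :: "'v \<Rightarrow> (('v,'a) itrace set \<times> rat) set \<Rightarrow> bool" where
  "liveness_pairs Hvar P \<longleftrightarrow> (\<forall>q. liveness Hvar {M. (M, q) \<in> P})"

definition out_trace :: "'v \<Rightarrow> 'v \<Rightarrow> ('v,'a) itrace set \<Rightarrow> 'a \<Rightarrow> nat \<Rightarrow> 'a" where
  "out_trace Hvar Ovar M h = (\<lambda>i. (THE t. t \<in> M \<and> t 0 Hvar = h) (Suc i) Ovar)"

(* termination-insensitive observation: M(h) = o *)
definition obs_eq :: "'a \<Rightarrow> (nat \<Rightarrow> 'a) \<Rightarrow> (nat \<Rightarrow> 'a) \<Rightarrow> bool" where
  "obs_eq botv m ob \<longleftrightarrow> (\<forall>i. ob i = botv \<or> m i = botv \<or> m i = ob i)"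

definition outputs :: "'v \<Rightarrow> 'v \<Rightarrow> ('v,'a) itrace set \<Rightarrow> (nat \<Rightarrow> 'a) set" where
  "outputs Hvar Ovar M = out_trace Hvar Ovar M ` input_domain Hvar M"

definition prob_O :: "'v \<Rightarrow> 'v \<Rightarrow> 'a \<Rightarrow> ('v,'a) itrace set \<Rightarrow> ('a \<Rightarrow> real) \<Rightarrow> (nat \<Rightarrow> 'a) \<Rightarrow> real" where
  "prob_O Hvar Ovar botv M mu ob = (\<Sum>h\<in>{h \<in> input_domain Hvar M. obs_eq botv (out_trace Hvar Ovar M h) ob}. mu h)"

definition cond_H :: "'v \<Rightarrow> 'v \<Rightarrow> 'a \<Rightarrow> ('v,'a) itrace set \<Rightarrow> ('a \<Rightarrow> real) \<Rightarrow> (nat \<Rightarrow> 'a) \<Rightarrow> 'a \<Rightarrow> real" where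
  "cond_H Hvar Ovar botv M mu ob h =
     (if obs_eq botv (out_trace Hvar Ovar M h) ob then mu h else 0) / prob_O Hvar Ovar botv M mu ob"

definition uniform :: "'v \<Rightarrow> ('v,'a) itrace set \<Rightarrow> 'a \<Rightarrow> real" where
  "uniform Hvar M h = (if h \<in> input_domain Hvar M then 1 / real (card (input_domain Hvar M)) else 0)"

definition shannon :: "'b set \<Rightarrow> ('b \<Rightarrow> real) \<Rightarrow> real" where
  "shannon A p = (\<Sum>x\<in>A. p x * log 2 (1 / p x))"

definition vuln :: "'b set \<Rightarrow> ('b \<Rightarrow> real) \<Rightarrow> real" where
  "vuln A p = Max (p ` A)"

definition guessing :: "'b set \<Rightarrow> ('b \<Rightarrow> real) \<Rightarrow> real" where
  "guessing A p = (let xs = rev (sorted_list_of_multiset (image_mset p (mset_set A)))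
                   in (\<Sum>i<length xs. real (Suc i) * xs ! i))"

definition SE :: "'v \<Rightarrow> 'v \<Rightarrow> 'a \<Rightarrow> ('a \<Rightarrow> real) \<Rightarrow> ('v,'a) itrace set \<Rightarrow> real" where
  "SE Hvar Ovar botv mu M =
     shannon (input_domain Hvar M) mu
     - (\<Sum>ob\<in>outputs Hvar Ovar M. prob_O Hvar Ovar botv M mu ob * shannon (input_domain Hvar M) (cond_H Hvar Ovar botv M mu ob))"

definition ME :: "'v \<Rightarrow> 'v \<Rightarrow> 'a \<Rightarrow> ('a \<Rightarrow> real) \<Rightarrow> ('v,'a) itrace set \<Rightarrow> real" where
  "ME Hvar Ovar botv mu M =
     log 2 (1 / vuln (input_domain Hvar M) mu)
     - log 2 (1 / (\<Sum>ob\<in>outputs Hvar Ovar M. prob_O Hvar Ovar botv M mu ob * vuln (input_domain Hvar M) (cond_H Hvar Ovar botv M mu ob)))"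

definition GE :: "'v \<Rightarrow> 'v \<Rightarrow> 'a \<Rightarrow> ('a \<Rightarrow> real) \<Rightarrow> ('v,'a) itrace set \<Rightarrow> real" where
  "GE Hvar Ovar botv mu M =
     guessing (input_domain Hvar M) mu
     - (\<Sum>ob\<in>outputs Hvar Ovar M. prob_O Hvar Ovar botv M mu ob * guessing (input_domain Hvar M) (cond_H Hvar Ovar botv M mu ob))"

definition L_SE :: "'v \<Rightarrow> 'v \<Rightarrow> 'a \<Rightarrow> (('v,'a) itrace set \<times> rat) set" where
  "L_SE Hvar Ovar botv = {(M, q). is_program Hvar M \<and> SE Hvar Ovar botv (uniform Hvar M) M > real_of_rat q}"

definition L_ME :: "'v \<Rightarrow> 'v \<Rightarrow> 'a \<Rightarrow> (('v,'a) itrace set \<times> rat) set" where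
  "L_ME Hvar Ovar botv = {(M, q). is_program Hvar M \<and> ME Hvar Ovar botv (uniform Hvar M) M > real_of_rat q}"

definition L_GE :: "'v \<Rightarrow> 'v \<Rightarrow> 'a \<Rightarrow> (('v,'a) itrace set \<times> rat) set" where
  "L_GE Hvar Ovar botv = {(M, q). is_program Hvar M \<and> GE Hvar Ovar botv (uniform Hvar M) M > real_of_rat q}"

end

theory Submission
  imports Defs
begin

text \<open>Every observation can be extended to a program with arbitrarily many inputs, each of
which writes its own fresh value, distinct from the termination symbol, to the output once
all traces of the observation have ended. Such a program reveals its input completely, so
under the uniform prior on \<open>n\<close> inputs it leaks \<open>SE = ME = log n\<close> and \<open>GE = (n - 1)/2\<close>;
both grow without bound.\<close>

lemma obs_eq_refl: "obs_eq botv m m"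
  unfolding obs_eq_def by simp

lemma image_mset_mset_set_const:
  assumes "\<forall>x\<in>A. p x = c"
  shows "image_mset p (mset_set A) = replicate_mset (card A) c"
proof (cases "finite A")
  case True
  then have "image_mset p (mset_set A) = image_mset (\<lambda>_. c) (mset_set A)"
    using assms by (intro image_mset_cong) simp
  then show ?thesis by (simp add: image_mset_const_eq)
qed simp

lemma guessing_const:
  assumes "\<forall>x\<in>A. p x = c"
  shows "guessing A p = c * (real (card A) * (real (card A) + 1) / 2)"
proof -
  have "rev (sorted_list_of_multiset (image_mset p (mset_set A))) = replicate (card A) c"
    using image_mset_mset_set_const[OF assms]
    by (metis mset_replicate rev_replicate sort_replicate sorted_list_of_multiset_mset)
  moreover have "(\<Sum>i<n. real (Suc i) * c) = c * (real n * (real n + 1) / 2)" for n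
    by (induction n) (auto simp: algebra_simps)
  ultimately show ?thesis
    unfolding guessing_def Let_def by simp
qed

lemma guessing_point_mass:
  assumes "finite A" "x0 \<in> A" "\<forall>x\<in>A. p x = (if x = x0 then 1 else 0)"
  shows "guessing A p = 1"
proof -
  have "image_mset p (mset_set A) = add_mset 1 (image_mset p (mset_set (A - {x0})))"
    using assms by (simp add: mset_set.remove)
  also have "image_mset p (mset_set (A - {x0})) = replicate_mset (card A - 1) 0"
    using image_mset_mset_set_const[of "A - {x0}" p 0] assms by auto
  finally have "image_mset p (mset_set A) = mset (1 # replicate (card A - 1) 0)"
    by simp
  moreover have "sort (1 # replicate (card A - 1) (0::real)) = replicate (card A - 1) 0 @ [1]"
    by (rule properties_for_sort) (auto simp: sorted_append)
  ultimately have "rev (sorted_list_of_multiset (image_mset p (mset_set A)))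
      = 1 # replicate (card A - 1) 0"
    by (simp only: sorted_list_of_multiset_mset) simp
  moreover have "(\<Sum>i<Suc n. real (Suc i) * ((1::real) # replicate n 0) ! i) = 1" for n
    by (subst sum.lessThan_Suc_shift) simp
  ultimately show ?thesis
    unfolding guessing_def Let_def by simp
qed

definition distinguishes_inputs :: "'v \<Rightarrow> 'v \<Rightarrow> 'a \<Rightarrow> ('v,'a) itrace set \<Rightarrow> bool" where
  "distinguishes_inputs Hvar Ovar botv M \<longleftrightarrow>
     (\<forall>h\<in>input_domain Hvar M. \<forall>h'\<in>input_domain Hvar M.
        obs_eq botv (out_trace Hvar Ovar M h) (out_trace Hvar Ovar M h') \<longrightarrow> h = h')"

locale distinguishing_program =
  fixes Hvar Ovar :: 'v and botv :: 'a and M :: "('v,'a) itrace set"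
  assumes program: "is_program Hvar M"
    and distinguishes: "distinguishes_inputs Hvar Ovar botv M"
begin

abbreviation "inputs \<equiv> input_domain Hvar M"
abbreviation "n \<equiv> card inputs"
abbreviation "out \<equiv> out_trace Hvar Ovar M"
abbreviation "U \<equiv> uniform Hvar M"

lemma finite_inputs: "finite inputs"
  and inputs_nonempty: "inputs \<noteq> {}"
  using program unfolding is_program_def by auto

lemma card_inputs_pos: "n > 0"
  using finite_inputs inputs_nonempty by (simp add: card_gt_0_iff)

lemma uniform_inputs: "h \<in> inputs \<Longrightarrow> U h = 1 / real n"
  unfolding uniform_def by simp

lemma obs_eq_out_iff:
  assumes "h \<in> inputs" "h' \<in> inputs"
  shows "obs_eq botv (out h) (out h') \<longleftrightarrow> h = h'"
  using distinguishes assms obs_eq_refl unfolding distinguishes_inputs_def by metis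

lemma sum_outputs: "(\<Sum>ob\<in>outputs Hvar Ovar M. g ob) = (\<Sum>h\<in>inputs. g (out h))"
proof -
  have "inj_on out inputs"
    unfolding inj_on_def using obs_eq_out_iff obs_eq_refl by metis
  then show ?thesis
    unfolding outputs_def by (simp add: sum.reindex)
qed

lemma prob_O_out: "h0 \<in> inputs \<Longrightarrow> prob_O Hvar Ovar botv M U (out h0) = 1 / real n"
proof -
  assume h0: "h0 \<in> inputs"
  then have "{h \<in> inputs. obs_eq botv (out h) (out h0)} = {h0}"
    using obs_eq_out_iff by auto
  then show ?thesis
    unfolding prob_O_def using uniform_inputs h0 by simp
qed

lemma cond_H_out:
  assumes "h0 \<in> inputs" "h \<in> inputs"
  shows "cond_H Hvar Ovar botv M U (out h0) h = (if h = h0 then 1 else 0)"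
  unfolding cond_H_def
  using obs_eq_out_iff[OF assms(2,1)] prob_O_out[OF assms(1)] uniform_inputs[OF assms(1)]
    card_inputs_pos by simp

lemma expected_posterior:
  assumes "\<And>h0. h0 \<in> inputs \<Longrightarrow> F (cond_H Hvar Ovar botv M U (out h0)) = c"
  shows "(\<Sum>ob\<in>outputs Hvar Ovar M. prob_O Hvar Ovar botv M U ob * F (cond_H Hvar Ovar botv M U ob)) = c"
proof -
  have "(\<Sum>ob\<in>outputs Hvar Ovar M. prob_O Hvar Ovar botv M U ob * F (cond_H Hvar Ovar botv M U ob))
      = (\<Sum>h\<in>inputs. c / real n)"
    unfolding sum_outputs using assms prob_O_out by (intro sum.cong) auto
  also have "\<dots> = c"
    using card_inputs_pos by simp
  finally show ?thesis .
qed

lemma SE_uniform: "SE Hvar Ovar botv U M = log 2 n"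
proof -
  have "shannon inputs U = (\<Sum>h\<in>inputs. 1 / real n * log 2 (real n))"
    unfolding shannon_def using uniform_inputs by (intro sum.cong) auto
  also have "\<dots> = log 2 n"
    using card_inputs_pos by simp
  finally have prior: "shannon inputs U = log 2 n" .
  have "shannon inputs (cond_H Hvar Ovar botv M U (out h0)) = 0" if "h0 \<in> inputs" for h0
    unfolding shannon_def using cond_H_out[OF that] by (intro sum.neutral) auto
  then show ?thesis
    unfolding SE_def prior by (subst expected_posterior[where c = 0]) auto
qed

lemma ME_uniform: "ME Hvar Ovar botv U M = log 2 n"
proof -
  have "U ` inputs = {1 / real n}"
    using uniform_inputs inputs_nonempty by auto
  then have prior: "vuln inputs U = 1 / real n"
    unfolding vuln_def by simp
  have "vuln inputs (cond_H Hvar Ovar botv M U (out h0)) = 1" if "h0 \<in> inputs" for h0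
    unfolding vuln_def using that cond_H_out[OF that] finite_inputs
    by (intro Max_eqI) (auto intro!: image_eqI[where x = h0])
  then show ?thesis
    unfolding ME_def prior by (subst expected_posterior[where c = 1]) auto
qed

lemma GE_uniform: "GE Hvar Ovar botv U M = (real n - 1) / 2"
proof -
  have "guessing inputs U = 1 / real n * (real n * (real n + 1) / 2)"
    by (rule guessing_const) (simp add: uniform_inputs)
  then have prior: "guessing inputs U = (real n + 1) / 2"
    using card_inputs_pos by simp
  have "guessing inputs (cond_H Hvar Ovar botv M U (out h0)) = 1" if "h0 \<in> inputs" for h0
    using guessing_point_mass[OF finite_inputs that] cond_H_out[OF that] by blast
  then show ?thesis
    unfolding GE_def prior by (subst expected_posterior[where c = 1]) (auto simp: field_simps)
qed

end

lemma program_of_prefixes: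
  fixes pre :: "'a \<Rightarrow> ('v,'a) ftrace" and w :: "'a \<Rightarrow> ('v,'a) itrace"
  assumes "finite A" "A \<noteq> {}" and pre: "\<forall>h\<in>A. pre h \<noteq> [] \<and> hd (pre h) Hvar = h"
  defines "M \<equiv> (\<lambda>h. concat_trace (pre h) (w h)) ` A"
  shows "is_program Hvar M" and "input_domain Hvar M = A"
    and "h \<in> A \<Longrightarrow> out_trace Hvar Ovar M h = (\<lambda>i. concat_trace (pre h) (w h) (Suc i) Ovar)"
proof -
  have start: "concat_trace (pre h) (w h) 0 Hvar = h" if "h \<in> A" for h
    using pre that unfolding concat_trace_def by (simp add: hd_conv_nth[symmetric])
  have "input_domain Hvar M = (\<lambda>h. concat_trace (pre h) (w h) 0 Hvar) ` A"
    unfolding input_domain_def M_def by blast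
  also have "\<dots> = A"
    using start by force
  finally show dom: "input_domain Hvar M = A" .
  have "deterministic_inf Hvar M"
    unfolding deterministic_inf_def M_def using start by auto
  then show "is_program Hvar M"
    unfolding is_program_def dom using assms(1,2) by simp
  assume "h \<in> A"
  then have "(THE t. t \<in> M \<and> t 0 Hvar = h) = concat_trace (pre h) (w h)"
    using start unfolding M_def by (intro the_equality) auto
  then show "out_trace Hvar Ovar M h = (\<lambda>i. concat_trace (pre h) (w h) (Suc i) Ovar)"
    unfolding out_trace_def by simp
qed

lemma obs_traces_by_input:
  assumes "is_obs Hvar S"
  obtains K pre where "finite K"
    and "\<And>h. h \<in> K \<Longrightarrow> pre h \<noteq> [] \<and> hd (pre h) Hvar = h \<and> pre h \<in> S"
    and "\<And>t. t \<in> S \<Longrightarrow> t \<noteq> [] \<Longrightarrow> hd t Hvar \<in> K \<and> pre (hd t Hvar) = t"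
proof
  let ?K = "(\<lambda>t. hd t Hvar) ` {t \<in> S. t \<noteq> []}"
  let ?pre = "\<lambda>h. THE t. t \<in> S \<and> t \<noteq> [] \<and> hd t Hvar = h"
  have pre: "?pre (hd t Hvar) = t" if "t \<in> S" "t \<noteq> []" for t
    using that assms unfolding is_obs_def deterministic_fin_def by (intro the_equality) auto
  show "finite ?K"
    using assms unfolding is_obs_def by simp
  show "?pre h \<noteq> [] \<and> hd (?pre h) Hvar = h \<and> ?pre h \<in> S" if "h \<in> ?K" for h
    using that pre by auto
  show "hd t Hvar \<in> ?K \<and> ?pre (hd t Hvar) = t" if "t \<in> S" "t \<noteq> []" for t
    using that pre by auto
qed

text \<open>Inputs not occurring in \<open>S\<close> start with a one-store trace; after the longest trace of
\<open>S\<close> every input writes a distinct value different from \<open>botv\<close>, which separates all outputs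
even termination-insensitively.\<close>

lemma obs_extends_to_distinguishing_program:
  fixes S :: "('v,'a) ftrace set" and Hvar Ovar :: 'v and botv :: 'a
  assumes inf: "infinite (UNIV :: 'a set)" and obs: "is_obs Hvar S"
  shows "\<exists>M. is_program Hvar M \<and> prefix_le S M \<and> distinguishes_inputs Hvar Ovar botv M
           \<and> card (input_domain Hvar M) \<ge> N"
proof -
  obtain K tK where finK: "finite K"
    and tK: "\<And>h. h \<in> K \<Longrightarrow> tK h \<noteq> [] \<and> hd (tK h) Hvar = h \<and> tK h \<in> S"
    and tS: "\<And>t. t \<in> S \<Longrightarrow> t \<noteq> [] \<Longrightarrow> hd t Hvar \<in> K \<and> tK (hd t Hvar) = t"
    using obs_traces_by_input[OF obs] by blast
  define L where "L = Suc (\<Sum>t\<in>S. length t)"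
  have len_S: "length t < L" if "t \<in> S" for t
    using member_le_sum[of t S length] that obs unfolding L_def is_obs_def by simp
  obtain e where e: "e \<notin> insert botv K"
    using ex_new_if_finite[OF inf] finK by blast
  obtain D where D: "finite D" "card D = Suc N" "D \<subseteq> - insert e (insert botv K)"
    using infinite_arbitrarily_large[of "- insert e (insert botv K)"] inf finK
    by (metis Compl_eq_Diff_UNIV finite.insertI finite_Diff2)
  define A where "A = K \<union> D"
  define pre where "pre h = (if h \<in> K then tK h else [\<lambda>_. h])" for h
  define c where "c h = (if h = botv then e else h)" for h
  define w :: "'a \<Rightarrow> ('v,'a) itrace" where "w h = (\<lambda>_ _. c h)" for h
  define M where "M = (\<lambda>h. concat_trace (pre h) (w h)) ` A"
  have finA: "finite A"
    unfolding A_def using finK D(1) by simp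
  have cardA: "card A \<ge> Suc N"
    using card_mono[OF finA, of D] D(2) unfolding A_def by simp
  then have "A \<noteq> {}" by auto
  have pre: "\<forall>h\<in>A. pre h \<noteq> [] \<and> hd (pre h) Hvar = h"
    using tK unfolding pre_def by auto
  note M = program_of_prefixes[where pre = pre and w = w and Hvar = Hvar, OF finA \<open>A \<noteq> {}\<close> pre,
      folded M_def]
  have "out_trace Hvar Ovar M h L = c h" if "h \<in> A" for h
  proof -
    have "length (pre h) \<le> L"
      using len_S tK unfolding pre_def L_def by (auto simp: less_imp_le)
    then show ?thesis
      using M(3)[OF that] unfolding concat_trace_def w_def by simp
  qed
  moreover have "c h \<noteq> botv" and "inj_on c A" for h
    using e D(3) unfolding c_def A_def inj_on_def by auto
  ultimately have "distinguishes_inputs Hvar Ovar botv M"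
    unfolding distinguishes_inputs_def obs_eq_def M(2) by (metis inj_onD)
  moreover have "prefix_le S M"
    unfolding prefix_le_def
  proof
    fix t assume t: "t \<in> S"
    show "\<exists>t'. concat_trace t t' \<in> M"
    proof (cases "t = []")
      case True
      obtain h where "h \<in> A" using \<open>A \<noteq> {}\<close> by blast
      then show ?thesis
        using True unfolding M_def concat_trace_def by auto
    next
      case False
      then have "concat_trace t (w (hd t Hvar)) \<in> M"
        using tS[OF t] unfolding M_def pre_def A_def by force
      then show ?thesis by blast
    qed
  qed
  ultimately show ?thesis
    using M(1,2) cardA by auto
qed

lemma liveness_pairs_of_unbounded:
  assumes "\<And>S r. is_obs Hvar S \<Longrightarrow> \<exists>M. is_program Hvar M \<and> prefix_le S M \<and> F M > r"
  shows "liveness_pairs Hvar {(M, q). is_program Hvar M \<and> F M > real_of_rat q}"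
  unfolding liveness_pairs_def liveness_def using assms by fast

lemma ex_threshold_log_and_half_gt:
  "\<exists>N. \<forall>n\<ge>N. log 2 (real n) > r \<and> (real n - 1) / 2 > r"
proof (intro exI allI impI conjI)
  fix n :: nat
  assume n: "n \<ge> nat \<lceil>2 powr r\<rceil> + nat \<lceil>2 * r\<rceil> + 2"
  then have "real n > 2 powr r" and "real n > 2 * r + 1"
    by linarith+
  moreover have "real n > 0"
    using \<open>real n > 2 powr r\<close> powr_gt_zero[of 2 r] by linarith
  ultimately show "log 2 (real n) > r" and "(real n - 1) / 2 > r"
    using less_log_iff[of 2 "real n" r] by auto
qed

theorem theorem2:
  fixes Hvar Ovar :: 'v and botv :: 'a
  assumes "infinite (UNIV :: 'a set)"
  shows "liveness_pairs Hvar (L_SE Hvar Ovar botv) \<and> liveness_pairs Hvar (L_ME Hvar Ovar botv) \<and> liveness_pairs Hvar (L_GE Hvar Ovar botv)"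
proof -
  have unbounded: "\<exists>M. is_program Hvar M \<and> prefix_le S M \<and> SE Hvar Ovar botv (uniform Hvar M) M > r
      \<and> ME Hvar Ovar botv (uniform Hvar M) M > r \<and> GE Hvar Ovar botv (uniform Hvar M) M > r"
    if obs: "is_obs Hvar S" for S r
  proof -
    obtain N where N: "\<forall>n\<ge>N. log 2 (real n) > r \<and> (real n - 1) / 2 > r"
      using ex_threshold_log_and_half_gt by blast
    obtain M where M: "is_program Hvar M" "prefix_le S M"
        "distinguishes_inputs Hvar Ovar botv M" "card (input_domain Hvar M) \<ge> N"
      using obs_extends_to_distinguishing_program[OF assms obs] by blast
    interpret distinguishing_program Hvar Ovar botv M
      using M by unfold_locales
    show ?thesis
      using M N SE_uniform ME_uniform GE_uniform by (intro exI[of _ M]) auto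
  qed
  show ?thesis
    unfolding L_SE_def L_ME_def L_GE_def
    by (intro conjI liveness_pairs_of_unbounded) (use unbounded in blast)+
qed

end
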